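(* Let $\mathfrak g$ be the Lie algebra of the isometry group of a rank $1$ symmetric space $M$ of noncompact type, and let $\mathcal N$ be the space defined below. Then: (1) if $M=\mathbb H^n$ ($n\ge2$), then $\mathfrak n=\mathfrak g_\alpha\cong\mathbb R^{n-1}$ and $\mathcal N=\{h\in\mathrm{Sym}_2\mathbb R^{n-1}:\mathrm{tr}\,h=0\}$; (2) if $M=\mathbb{CH}^{2n}$ (real dimension $2n$, $n\ge2$), then $\mathfrak n=\mathfrak g_\alpha\oplus\mathfrak g_{2\alpha}\cong\mathbb C^{n-1}\oplus\mathbb R$, and, viewing $\mathbb C^{n-1}$ as a real vector space with $J$ the multiplication by $i$, $\mathcal N=\{h\in\mathrm{Sym}_2\mathbb C^{n-1}:Jh+hJ=0\}$ (extended by zero on $\mathfrak g_{2\alpha}$); (3) if $M$ is the quaternionic hyperbolic space $\mathbb{HH}^{4n}$ ($n\ge2$) or the octonionic hyperbolic plane $\mathbb{OH}^{16}$, then $\mathcal N=\{0\}$.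
   Context: Notation: $\mathfrak g=\mathfrak p\oplus\mathfrak k$ Cartan decomposition with involution $\sigma$, Killing form $\langle\cdot,\cdot\rangle$, maximal abelian $\mathfrak a\subset\mathfrak p$ (one-dimensional), positive roots $\alpha$ (and $2\alpha$ in the non-real cases), $\mathfrak n=\bigoplus_{\beta\in\Delta^+}\mathfrak g_\beta$ with inner product $(x,y)=-\langle x,\sigma y\rangle$. Symmetric bilinear forms on the orthogonal complement of $\mathfrak a$ in $\mathfrak p$ are identified with $(\cdot,\cdot)$-self-adjoint endomorphisms of $\mathfrak n$ via $x\mapsto\frac1{\sqrt2}(x-\sigma x)$. $\mathcal N$ is the set of self-adjoint endomorphisms $h$ of $\mathfrak n$ such that (a) $h(\mathfrak g_\beta)\subset\mathfrak g_\beta$ for every positive root $\beta$; (b) $h[x,y]=[hx,y]+[x,hy]$ for all $x,y\in\mathfrak n$ (i.e. $h$ is a derivation of $\mathfrak n$); (c) $\sum_{\beta\in\Delta^+}\mathrm{tr}(h|_{\mathfrak g_\beta})\,\beta=0$ in $\mathfrak a^*$. Models: with $\mathbb K\in\{\mathbb R,\mathbb C,\mathbb H,\mathbb O\}$, $\mathfrak g_\alpha=\mathbb K^{n-1}$ (with $n=2$ for $\mathbb O$), $\mathfrak g_{2\alpha}=\mathrm{Im}\,\mathbb K$, and $[v,w]=2\,\mathrm{Im}\sum_i\bar v_iw_i$ for $v,w\in\mathfrak g_\alpha$. *)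

theory Defs
  imports Complex_Main
begin

text \<open>Real models of the normed division algebras via the Cayley--Dickson
construction.  An element of the algebra of level k (real dimension 2^k:
k = 0,1,2,3 gives R, C, H, O) is a function nat => real supported on
{0..<2^k}; coordinate 0 is the real part.\<close>

definition cd_lo :: "nat \<Rightarrow> (nat \<Rightarrow> real) \<Rightarrow> (nat \<Rightarrow> real)" where
  "cd_lo k x = (\<lambda>i. if i < 2^k then x i else 0)"

definition cd_hi :: "nat \<Rightarrow> (nat \<Rightarrow> real) \<Rightarrow> (nat \<Rightarrow> real)" where
  "cd_hi k x = (\<lambda>i. if i < 2^k then x (i + 2^k) else 0)"

definition cd_join :: "nat \<Rightarrow> (nat \<Rightarrow> real) \<Rightarrow> (nat \<Rightarrow> real) \<Rightarrow> (nat \<Rightarrow> real)" where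
  "cd_join k a b = (\<lambda>i. if i < 2^k then a i else if i < 2^Suc k then b (i - 2^k) else 0)"

fun cd_conj :: "nat \<Rightarrow> (nat \<Rightarrow> real) \<Rightarrow> (nat \<Rightarrow> real)" where
  "cd_conj 0 x = (\<lambda>i. if i = 0 then x 0 else 0)"
| "cd_conj (Suc k) x = cd_join k (cd_conj k (cd_lo k x)) (\<lambda>i. - cd_hi k x i)"

text \<open>(a,b)(c,d) = (ac - conj(d) b, d a + b conj(c)).\<close>
fun cd_mult :: "nat \<Rightarrow> (nat \<Rightarrow> real) \<Rightarrow> (nat \<Rightarrow> real) \<Rightarrow> (nat \<Rightarrow> real)" where
  "cd_mult 0 x y = (\<lambda>i. if i = 0 then x 0 * y 0 else 0)"
| "cd_mult (Suc k) x y =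
     cd_join k
       (\<lambda>i. cd_mult k (cd_lo k x) (cd_lo k y) i
             - cd_mult k (cd_conj k (cd_hi k y)) (cd_hi k x) i)
       (\<lambda>i. cd_mult k (cd_hi k y) (cd_lo k x) i
             + cd_mult k (cd_hi k x) (cd_conj k (cd_lo k y)) i)"

definition cd_im :: "nat \<Rightarrow> (nat \<Rightarrow> real) \<Rightarrow> (nat \<Rightarrow> real)" where
  "cd_im k x = (\<lambda>i. if 0 < i \<and> i < 2^k then x i else 0)"

text \<open>The nilpotent algebra n = g_alpha + g_2alpha = K^m + Im K, K of level k.
An element is a pair (v, z): v i j is the j-th real coordinate of the i-th
K-component (i < m), z j the j-th coordinate of the Im K-part (0 < j < 2^k).\<close>

type_synonym nvec = "(nat \<Rightarrow> nat \<Rightarrow> real) \<times> (nat \<Rightarrow> real)"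

definition nzero :: nvec where "nzero = ((\<lambda>_ _. 0), (\<lambda>_. 0))"

definition nadd :: "nvec \<Rightarrow> nvec \<Rightarrow> nvec" where
  "nadd x y = ((\<lambda>i j. fst x i j + fst y i j), (\<lambda>j. snd x j + snd y j))"

definition nscale :: "real \<Rightarrow> nvec \<Rightarrow> nvec" where
  "nscale c x = ((\<lambda>i j. c * fst x i j), (\<lambda>j. c * snd x j))"

definition nn :: "nat \<Rightarrow> nat \<Rightarrow> nvec set" where
  "nn k m = {(v, z). (\<forall>i j. (m \<le> i \<or> 2^k \<le> j) \<longrightarrow> v i j = 0)
                    \<and> z 0 = 0 \<and> (\<forall>j. 2^k \<le> j \<longrightarrow> z j = 0)}"

definition galpha :: "nat \<Rightarrow> nat \<Rightarrow> nvec set" where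
  "galpha k m = {(v, z). (\<forall>i j. (m \<le> i \<or> 2^k \<le> j) \<longrightarrow> v i j = 0) \<and> z = (\<lambda>_. 0)}"

definition g2alpha :: "nat \<Rightarrow> nat \<Rightarrow> nvec set" where
  "g2alpha k m = {(v, z). v = (\<lambda>_ _. 0) \<and> z 0 = 0 \<and> (\<forall>j. 2^k \<le> j \<longrightarrow> z j = 0)}"

text \<open>Bracket: [v + z, v' + z'] = 2 Im sum_i conj(v_i) v'_i  (g_2alpha is central).\<close>
definition nbr :: "nat \<Rightarrow> nat \<Rightarrow> nvec \<Rightarrow> nvec \<Rightarrow> nvec" where
  "nbr k m x y = ((\<lambda>_ _. 0),
     (\<lambda>j. 2 * cd_im k (\<lambda>j'. \<Sum>i<m. cd_mult k (cd_conj k (fst x i)) (fst y i) j') j))"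

definition ninner :: "nat \<Rightarrow> nat \<Rightarrow> nvec \<Rightarrow> nvec \<Rightarrow> real" where
  "ninner k m x y = (\<Sum>i<m. \<Sum>j<2^k. fst x i j * fst y i j) + (\<Sum>j<2^k. snd x j * snd y j)"

definition nendo :: "nat \<Rightarrow> nat \<Rightarrow> (nvec \<Rightarrow> nvec) \<Rightarrow> bool" where
  "nendo k m h \<longleftrightarrow> (\<forall>x\<in>nn k m. h x \<in> nn k m)
     \<and> (\<forall>x\<in>nn k m. \<forall>y\<in>nn k m. h (nadd x y) = nadd (h x) (h y))
     \<and> (\<forall>c. \<forall>x\<in>nn k m. h (nscale c x) = nscale c (h x))"

definition selfadj :: "nat \<Rightarrow> nat \<Rightarrow> (nvec \<Rightarrow> nvec) \<Rightarrow> bool" where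
  "selfadj k m h \<longleftrightarrow> (\<forall>x\<in>nn k m. \<forall>y\<in>nn k m. ninner k m (h x) y = ninner k m x (h y))"

definition ea :: "nat \<Rightarrow> nat \<Rightarrow> nvec" where
  "ea i j = ((\<lambda>i' j'. if i' = i \<and> j' = j then 1 else 0), (\<lambda>_. 0))"

definition ez :: "nat \<Rightarrow> nvec" where
  "ez j = ((\<lambda>_ _. 0), (\<lambda>j'. if j' = j then 1 else 0))"

definition tr_alpha :: "nat \<Rightarrow> nat \<Rightarrow> (nvec \<Rightarrow> nvec) \<Rightarrow> real" where
  "tr_alpha k m h = (\<Sum>i<m. \<Sum>j<2^k. fst (h (ea i j)) i j)"

definition tr_2alpha :: "nat \<Rightarrow> nat \<Rightarrow> (nvec \<Rightarrow> nvec) \<Rightarrow> real" where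
  "tr_2alpha k m h = (\<Sum>j\<in>{1..<2^k}. snd (h (ez j)) j)"

text \<open>The space N: self-adjoint endomorphisms preserving root spaces, derivations,
with sum_beta tr(h|g_beta) beta = (tr_alpha + 2 tr_2alpha) alpha = 0.\<close>
definition NN :: "nat \<Rightarrow> nat \<Rightarrow> (nvec \<Rightarrow> nvec) set" where
  "NN k m = {h. nendo k m h \<and> selfadj k m h
      \<and> (\<forall>x\<in>galpha k m. h x \<in> galpha k m)
      \<and> (\<forall>x\<in>g2alpha k m. h x \<in> g2alpha k m)
      \<and> (\<forall>x\<in>nn k m. \<forall>y\<in>nn k m.
            h (nbr k m x y) = nadd (nbr k m (h x) y) (nbr k m x (h y)))
      \<and> tr_alpha k m h + 2 * tr_2alpha k m h = 0}"

text \<open>Complex structure J (multiplication by i) on g_alpha = C^m.\<close>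
definition cJ :: "nvec \<Rightarrow> nvec" where
  "cJ x = ((\<lambda>i. cd_mult 1 (\<lambda>j. if j = 1 then 1 else 0) (fst x i)), (\<lambda>_. 0))"

end

theory Submission
  imports Defs
begin

(* Let K be R, C, H or O (Cayley-Dickson level k = 0,1,2,3), n = K^m + Im K, and h in N.
   Right multiplication R_l by an imaginary unit e_l is a signed permutation of the
   coordinates, x_j |-> +-x_(j xor l); it is skew, squares to -1 and is orthogonal.
   Writing c_l for the (e_l,e_l)-entry of h on g_2alpha, the derivation property applied to
   [x, R_l x] = 2|x|^2 e_l gives  c_l |x|^2 = <hx,x> + <h R_l x, R_l x>.  Evaluating it on the
   standard basis and summing (R_l permutes the basis) shows that all c_l coincide with
   2 tr(h|K)/2^k, so the trace condition forces c_l = 0.  Polarising then shows that h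
   anticommutes with every R_l on g_alpha.  Conversely, self-adjoint maps of g_alpha that
   anticommute with the R_l, extended by zero on g_2alpha, are derivations, and they are
   traceless as soon as there is an imaginary unit.  Hence for C, N is the space of J-antilinear
   symmetric maps, for R it is the traceless symmetric maps, and for H and O an odd product
   of anticommuting R_l equals -1 (a volume element), which forces h = 0.
   The file first collects coordinate facts about the four algebras (checked by computation
   from the Cayley-Dickson recursion), then the linear algebra
   of n, then the general analysis of N inside a locale for the levels k <= 3, and finally
   specialises to the four cases of the theorem. *)

section \<open>Coordinates in the Cayley--Dickson algebras of level at most 3\<close>

definition cd_unit :: "nat \<Rightarrow> nat \<Rightarrow> real" where
  "cd_unit l = (\<lambda>j. if j = l then 1 else 0)"

lemma cd_mult_support: "2^k \<le> j \<Longrightarrow> cd_mult k a b j = 0"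
  by (cases k) (auto simp: cd_join_def)

lemma cd_conj_coord:
  "cd_conj k a j = (if j = 0 then a 0 else if j < 2^k then - a j else 0)"
proof (induction k arbitrary: a j)
  case 0
  then show ?case by simp
next
  case (Suc k)
  then show ?case by (auto simp: cd_join_def cd_lo_def cd_hi_def)
qed

text \<open>Basis indices of level k form the group of bit vectors of length k under xor.\<close>
lemma xor_less_power2: "a < 2^k \<Longrightarrow> b < 2^k \<Longrightarrow> xor a b < (2::nat)^k"
  by (metis take_bit_nat_eq_self_iff take_bit_xor)

lemma xor_xor_cancel: "xor (xor j l) l = (j::nat)"
  by (simp add: xor.assoc)

lemma xor_eq_iff: "xor j l = a \<longleftrightarrow> j = xor a (l::nat)"
  by (metis xor_xor_cancel)

lemma sum_xor_reindex:
  assumes "l < 2^k"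
  shows "(\<Sum>j<2^k. f (xor j l)) = (\<Sum>j<(2::nat)^k. f j)"
  by (rule sum.reindex_bij_witness[where i = "\<lambda>j. xor j l" and j = "\<lambda>j. xor j l"])
     (use assms in \<open>auto simp: xor_xor_cancel xor_less_power2\<close>)

text \<open>Signs in the octonion multiplication table: (a e_l)_j = cd_sign l j * a_(j xor l).
  The tables of R, C and H are the upper left blocks of size 1, 2 and 4.\<close>
definition cd_sign :: "nat \<Rightarrow> nat \<Rightarrow> real" where
  "cd_sign l j =
     [[ 1,  1,  1,  1,  1,  1,  1,  1],
      [-1,  1,  1, -1,  1, -1, -1,  1],
      [-1, -1,  1,  1,  1,  1, -1, -1],
      [-1,  1, -1,  1,  1, -1,  1, -1],
      [-1, -1, -1, -1,  1,  1,  1,  1],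
      [-1,  1, -1,  1, -1,  1, -1,  1],
      [-1,  1,  1, -1, -1,  1,  1, -1],
      [-1, -1,  1,  1, -1, -1,  1,  1]] ! l ! j"

lemma less8_cases: "(j::nat) < 8 \<longleftrightarrow> j = 0 \<or> j = 1 \<or> j = 2 \<or> j = 3 \<or> j = 4 \<or> j = 5 \<or> j = 6 \<or> j = 7"
  by auto

lemma less4_cases: "(j::nat) < 4 \<longleftrightarrow> j = 0 \<or> j = 1 \<or> j = 2 \<or> j = 3"
  by auto

lemma cd_sign_square: "l < 8 \<Longrightarrow> j < 8 \<Longrightarrow> cd_sign l j * cd_sign l j = 1"
  by (auto simp: less8_cases cd_sign_def)

text \<open>Sign antisymmetry along each orbit {j, j xor l}: it makes R_l skew with R_l^2 = -1.\<close>
lemma cd_sign_flip: "0 < l \<Longrightarrow> l < 8 \<Longrightarrow> j < 8 \<Longrightarrow> cd_sign l (xor j l) = - cd_sign l j"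
  by (auto simp: less8_cases cd_sign_def)

text \<open>e_0 is the unit: e_0 e_l = e_l.\<close>
lemma cd_sign_diag: "l < 8 \<Longrightarrow> cd_sign l l = 1"
  by (auto simp: less8_cases cd_sign_def)

lemma sum_lessThan_4: "(\<Sum>j<(4::nat). f j) = f 0 + f 1 + f 2 + f 3"
  by (simp add: numeral_eq_Suc)

lemma sum_lessThan_8: "(\<Sum>j<(8::nat). f j) = f 0 + f 1 + f 2 + f 3 + f 4 + f 5 + f 6 + f 7"
  by (simp add: numeral_eq_Suc)

lemma cd_mult2_coord:
  "cd_mult 2 a b 0 = a 0 * b 0 - a 1 * b 1 - a 2 * b 2 - a 3 * b 3"
  "cd_mult 2 a b 1 = a 0 * b 1 + a 1 * b 0 + a 2 * b 3 - a 3 * b 2"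
  "cd_mult 2 a b 2 = a 0 * b 2 - a 1 * b 3 + a 2 * b 0 + a 3 * b 1"
  "cd_mult 2 a b 3 = a 0 * b 3 + a 1 * b 2 - a 2 * b 1 + a 3 * b 0"
  "cd_mult 2 a b (Suc 0) = a 0 * b 1 + a 1 * b 0 + a 2 * b 3 - a 3 * b 2"
  by (simp_all add: cd_join_def cd_lo_def cd_hi_def numeral_eq_Suc algebra_simps)

lemma cd_mult3_coord:
  "cd_mult 3 a b 0 = a 0 * b 0 - a 1 * b 1 - a 2 * b 2 - a 3 * b 3 - a 4 * b 4 - a 5 * b 5 - a 6 * b 6 - a 7 * b 7"
  "cd_mult 3 a b 1 = a 0 * b 1 + a 1 * b 0 + a 2 * b 3 - a 3 * b 2 + a 4 * b 5 - a 5 * b 4 - a 6 * b 7 + a 7 * b 6"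
  "cd_mult 3 a b 2 = a 0 * b 2 - a 1 * b 3 + a 2 * b 0 + a 3 * b 1 + a 4 * b 6 + a 5 * b 7 - a 6 * b 4 - a 7 * b 5"
  "cd_mult 3 a b 3 = a 0 * b 3 + a 1 * b 2 - a 2 * b 1 + a 3 * b 0 + a 4 * b 7 - a 5 * b 6 + a 6 * b 5 - a 7 * b 4"
  "cd_mult 3 a b 4 = a 0 * b 4 - a 1 * b 5 - a 2 * b 6 - a 3 * b 7 + a 4 * b 0 + a 5 * b 1 + a 6 * b 2 + a 7 * b 3"
  "cd_mult 3 a b 5 = a 0 * b 5 + a 1 * b 4 - a 2 * b 7 + a 3 * b 6 - a 4 * b 1 + a 5 * b 0 - a 6 * b 3 + a 7 * b 2"
  "cd_mult 3 a b 6 = a 0 * b 6 + a 1 * b 7 + a 2 * b 4 - a 3 * b 5 - a 4 * b 2 + a 5 * b 3 + a 6 * b 0 - a 7 * b 1"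
  "cd_mult 3 a b 7 = a 0 * b 7 - a 1 * b 6 + a 2 * b 5 + a 3 * b 4 - a 4 * b 3 - a 5 * b 2 + a 6 * b 1 + a 7 * b 0"
  "cd_mult 3 a b (Suc 0) = a 0 * b 1 + a 1 * b 0 + a 2 * b 3 - a 3 * b 2 + a 4 * b 5 - a 5 * b 4 - a 6 * b 7 + a 7 * b 6"
  by (simp_all add: cd_join_def cd_lo_def cd_hi_def numeral_eq_Suc algebra_simps)

text \<open>Evaluating xor on numerals may produce Suc-terms; these rules turn them back into numerals.\<close>
lemmas numeral_simps_nat = numeral_2_eq_2[symmetric] numeral_3_eq_3[symmetric]

lemma right_mult0: "l < 2^0 \<Longrightarrow> j < 2^0 \<Longrightarrow> cd_mult 0 a (cd_unit l) j = cd_sign l j * a (xor j l)"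
  by (simp add: cd_unit_def cd_sign_def)

lemma right_mult1: "l < 2^1 \<Longrightarrow> j < 2^1 \<Longrightarrow> cd_mult 1 a (cd_unit l) j = cd_sign l j * a (xor j l)"
  by (auto simp: less_2_cases_iff cd_join_def cd_lo_def cd_hi_def cd_unit_def cd_sign_def)

lemma right_mult2: "l < 2^2 \<Longrightarrow> j < 2^2 \<Longrightarrow> cd_mult 2 a (cd_unit l) j = cd_sign l j * a (xor j l)"
  by (auto simp: less4_cases cd_mult2_coord cd_unit_def cd_sign_def numeral_simps_nat)

lemma right_mult3: "l < 2^3 \<Longrightarrow> j < 2^3 \<Longrightarrow> cd_mult 3 a (cd_unit l) j = cd_sign l j * a (xor j l)"
  by (auto simp: less8_cases cd_mult3_coord cd_unit_def cd_sign_def numeral_simps_nat)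

lemma conj_mult1: "0 < l \<Longrightarrow> l < 2^1 \<Longrightarrow>
    cd_mult 1 (cd_conj 1 a) b l = (\<Sum>j<2^1. cd_mult 1 a (cd_unit l) j * b j)"
  by (auto simp: less_2_cases_iff cd_join_def cd_lo_def cd_hi_def cd_unit_def numeral_2_eq_2 algebra_simps)

lemma conj_mult2: "0 < l \<Longrightarrow> l < 2^2 \<Longrightarrow>
    cd_mult 2 (cd_conj 2 a) b l = (\<Sum>j<2^2. cd_mult 2 a (cd_unit l) j * b j)"
  by (auto simp: less4_cases cd_mult2_coord cd_conj_coord sum_lessThan_4 cd_unit_def algebra_simps)

lemma conj_mult3: "0 < l \<Longrightarrow> l < 2^3 \<Longrightarrow>
    cd_mult 3 (cd_conj 3 a) b l = (\<Sum>j<2^3. cd_mult 3 a (cd_unit l) j * b j)"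
  by (auto simp: less8_cases cd_mult3_coord cd_conj_coord sum_lessThan_8 cd_unit_def algebra_simps)

lemma imag_orth1: "0 < l \<Longrightarrow> l < 2^1 \<Longrightarrow> 0 < l' \<Longrightarrow> l' < 2^1 \<Longrightarrow>
    cd_mult 1 (cd_conj 1 a) (cd_mult 1 a (cd_unit l)) l' = (if l' = l then (\<Sum>j<2^1. a j * a j) else 0)"
  by (auto simp: less_2_cases_iff cd_join_def cd_lo_def cd_hi_def cd_unit_def numeral_2_eq_2 algebra_simps)

lemma imag_orth2: "0 < l \<Longrightarrow> l < 2^2 \<Longrightarrow> 0 < l' \<Longrightarrow> l' < 2^2 \<Longrightarrow>
    cd_mult 2 (cd_conj 2 a) (cd_mult 2 a (cd_unit l)) l' = (if l' = l then (\<Sum>j<2^2. a j * a j) else 0)"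
  by (auto simp: less4_cases cd_mult2_coord cd_conj_coord sum_lessThan_4 cd_unit_def algebra_simps)

lemma imag_orth3: "0 < l \<Longrightarrow> l < 2^3 \<Longrightarrow> 0 < l' \<Longrightarrow> l' < 2^3 \<Longrightarrow>
    cd_mult 3 (cd_conj 3 a) (cd_mult 3 a (cd_unit l)) l' = (if l' = l then (\<Sum>j<2^3. a j * a j) else 0)"
  by (auto simp: less8_cases cd_mult3_coord cd_conj_coord sum_lessThan_8 cd_unit_def algebra_simps)

lemma volume2: "j < 2^2 \<Longrightarrow> foldl (\<lambda>a l. cd_mult 2 a (cd_unit l)) a [1, 2, 3] j = - a j"
  by (auto simp: less4_cases right_mult2 cd_sign_def numeral_simps_nat)

lemma volume3: "j < 2^3 \<Longrightarrow> foldl (\<lambda>a l. cd_mult 3 a (cd_unit l)) a [1, 2, 3, 4, 5, 6, 7] j = - a j"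
  by (auto simp: less8_cases right_mult3 cd_sign_def numeral_simps_nat)

section \<open>The algebra n = K^m + Im K\<close>

lemma nvec_eq: "(x::nvec) = y \<longleftrightarrow> (\<forall>i j. fst x i j = fst y i j) \<and> (\<forall>j. snd x j = snd y j)"
  by (cases x; cases y) (auto simp: fun_eq_iff)

lemma fst_nadd [simp]: "fst (nadd x y) = (\<lambda>i j. fst x i j + fst y i j)" by (simp add: nadd_def)
lemma snd_nadd [simp]: "snd (nadd x y) = (\<lambda>j. snd x j + snd y j)" by (simp add: nadd_def)
lemma fst_nscale [simp]: "fst (nscale c x) = (\<lambda>i j. c * fst x i j)" by (simp add: nscale_def)
lemma snd_nscale [simp]: "snd (nscale c x) = (\<lambda>j. c * snd x j)" by (simp add: nscale_def)
lemma fst_nzero [simp]: "fst nzero = (\<lambda>_ _. 0)" by (simp add: nzero_def)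
lemma snd_nzero [simp]: "snd nzero = (\<lambda>_. 0)" by (simp add: nzero_def)
lemma fst_ea [simp]: "fst (ea i a) = (\<lambda>i' j. if i' = i \<and> j = a then 1 else 0)" by (simp add: ea_def)
lemma snd_ea [simp]: "snd (ea i a) = (\<lambda>_. 0)" by (simp add: ea_def)
lemma fst_ez [simp]: "fst (ez l) = (\<lambda>_ _. 0)" by (simp add: ez_def)
lemma snd_ez [simp]: "snd (ez l) = (\<lambda>j. if j = l then 1 else 0)" by (simp add: ez_def)
lemma fst_nbr [simp]: "fst (nbr k m x y) = (\<lambda>_ _. 0)" by (simp add: nbr_def)

lemma nn_iff: "x \<in> nn k m \<longleftrightarrow> (\<forall>i j. (m \<le> i \<or> 2^k \<le> j) \<longrightarrow> fst x i j = 0)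
    \<and> snd x 0 = 0 \<and> (\<forall>j. 2^k \<le> j \<longrightarrow> snd x j = 0)"
  by (cases x) (simp add: nn_def)

lemma galpha_iff: "x \<in> galpha k m \<longleftrightarrow> (\<forall>i j. (m \<le> i \<or> 2^k \<le> j) \<longrightarrow> fst x i j = 0) \<and> snd x = (\<lambda>_. 0)"
  by (cases x) (simp add: galpha_def)

lemma g2alpha_iff: "x \<in> g2alpha k m \<longleftrightarrow> fst x = (\<lambda>_ _. 0) \<and> snd x 0 = 0 \<and> (\<forall>j. 2^k \<le> j \<longrightarrow> snd x j = 0)"
  by (cases x) (simp add: g2alpha_def)

lemma galpha_nn: "x \<in> galpha k m \<Longrightarrow> x \<in> nn k m"
  by (simp add: galpha_iff nn_iff)

lemma g2alpha_nn: "x \<in> g2alpha k m \<Longrightarrow> x \<in> nn k m"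
  by (simp add: g2alpha_iff nn_iff)

lemma galpha_nadd: "x \<in> galpha k m \<Longrightarrow> y \<in> galpha k m \<Longrightarrow> nadd x y \<in> galpha k m"
  by (simp add: galpha_iff)

lemma galpha_nscale: "x \<in> galpha k m \<Longrightarrow> nscale c x \<in> galpha k m"
  by (simp add: galpha_iff)

lemma nzero_galpha [simp]: "nzero \<in> galpha k m"
  by (simp add: galpha_iff)

lemma nzero_g2alpha [simp]: "nzero \<in> g2alpha k m"
  by (simp add: g2alpha_iff)

lemma ea_galpha: "i < m \<Longrightarrow> a < 2^k \<Longrightarrow> ea i a \<in> galpha k m"
  by (auto simp: galpha_iff)

lemma ez_g2alpha: "0 < l \<Longrightarrow> l < 2^k \<Longrightarrow> ez l \<in> g2alpha k m"
  by (auto simp: g2alpha_iff)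

lemma nbr_g2alpha: "nbr k m x y \<in> g2alpha k m"
  by (simp add: g2alpha_iff nbr_def cd_im_def)

lemma nn_decompose:
  assumes "x \<in> nn k m"
  shows "x = nadd (fst x, \<lambda>_. 0) ((\<lambda>_ _. 0), snd x)"
    and "(fst x, \<lambda>_. 0) \<in> galpha k m" and "((\<lambda>_ _. 0), snd x) \<in> g2alpha k m"
  using assms by (auto simp: nvec_eq galpha_iff g2alpha_iff nn_iff)

lemma ninner_sym: "ninner k m x y = ninner k m y x"
  by (simp add: ninner_def mult.commute)

lemma ninner_nadd_left: "ninner k m (nadd x y) w = ninner k m x w + ninner k m y w"
  by (simp add: ninner_def distrib_right sum.distrib)

lemma ninner_nadd_right: "ninner k m w (nadd x y) = ninner k m w x + ninner k m w y"
  using ninner_nadd_left[of k m x y w] by (simp add: ninner_sym)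

lemma ninner_nscale_left: "ninner k m (nscale c x) w = c * ninner k m x w"
  by (simp add: ninner_def sum_distrib_left distrib_left mult.assoc)

lemma ninner_nscale_right: "ninner k m w (nscale c x) = c * ninner k m w x"
  using ninner_nscale_left[of k m c x w] by (simp add: ninner_sym)

lemma ninner_nzero_left [simp]: "ninner k m nzero w = 0"
  by (simp add: ninner_def)

lemma ninner_nzero_right [simp]: "ninner k m w nzero = 0"
  by (simp add: ninner_def)

lemma ninner_self_eq_0:
  assumes x: "x \<in> nn k m" and "ninner k m x x = 0"
  shows "x = nzero"
proof -
  have sq_alpha: "0 \<le> (\<Sum>i<m. \<Sum>j<2^k. fst x i j * fst x i j)"
    and sq_2alpha: "0 \<le> (\<Sum>j<(2::nat)^k. snd x j * snd x j)"
    by (auto intro!: sum_nonneg)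
  then have "(\<Sum>i<m. \<Sum>j<2^k. fst x i j * fst x i j) = 0" "(\<Sum>j<(2::nat)^k. snd x j * snd x j) = 0"
    using \<open>ninner k m x x = 0\<close> by (simp_all add: ninner_def)
  then have "\<forall>i<m. \<forall>j<2^k. fst x i j = 0" and "\<forall>j<2^k. snd x j = 0"
    by (simp_all add: sum_nonneg_eq_0_iff sum_nonneg)
  with x show ?thesis
    by (auto simp: nvec_eq nn_iff; meson not_le)
qed

lemma galpha_ext:
  assumes u: "u \<in> galpha k m" and v: "v \<in> galpha k m"
    and inner: "\<And>y. y \<in> galpha k m \<Longrightarrow> ninner k m u y = ninner k m v y"
  shows "u = v"
proof -
  define w where "w = nadd u (nscale (-1) v)"
  have w: "w \<in> galpha k m" using u v by (simp add: w_def galpha_nadd galpha_nscale)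
  have "ninner k m w w = 0"
    using inner[OF w] by (simp add: w_def ninner_nadd_left ninner_nscale_left)
  then have "w = nzero" using ninner_self_eq_0 galpha_nn[OF w] by blast
  then show ?thesis by (auto simp: w_def nvec_eq)
qed

lemma ninner_ea:
  assumes "i < m" "a < 2^k"
  shows "ninner k m x (ea i a) = fst x i a"
proof -
  have delta: "c * (if P \<and> Q then 1 else 0) = (if Q then if P then c else 0 else 0)" for c :: real and P Q
    by simp
  show ?thesis using assms by (simp add: ninner_def delta)
qed

lemma nendo_nn: "nendo k m h \<Longrightarrow> x \<in> nn k m \<Longrightarrow> h x \<in> nn k m"
  by (simp add: nendo_def)

lemma nendo_nadd: "nendo k m h \<Longrightarrow> x \<in> nn k m \<Longrightarrow> y \<in> nn k m \<Longrightarrow> h (nadd x y) = nadd (h x) (h y)"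
  by (simp add: nendo_def)

lemma nendo_nscale: "nendo k m h \<Longrightarrow> x \<in> nn k m \<Longrightarrow> h (nscale c x) = nscale c (h x)"
  by (simp add: nendo_def)

lemma nendo_nzero:
  assumes "nendo k m h"
  shows "h nzero = nzero"
proof -
  have "h nzero = h (nscale 0 nzero)" by (simp add: nscale_def nzero_def)
  also have "\<dots> = nscale 0 (h nzero)" using nendo_nscale[OF assms] by (simp add: nn_iff)
  finally show ?thesis by (simp add: nvec_eq)
qed

lemma nendo_vanishes:
  assumes h: "nendo k m h" and "\<And>x. x \<in> galpha k m \<Longrightarrow> h x = nzero"
    and "\<And>z. z \<in> g2alpha k m \<Longrightarrow> h z = nzero" and x: "x \<in> nn k m"
  shows "h x = nzero"
proof -
  note parts = nn_decompose[OF x]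
  have "h x = nadd (h (fst x, \<lambda>_. 0)) (h ((\<lambda>_ _. 0), snd x))"
    using nendo_nadd[OF h galpha_nn[OF parts(2)] g2alpha_nn[OF parts(3)]] parts(1) by simp
  then show ?thesis using assms parts by (simp add: nvec_eq)
qed

lemma selfadj_quadratic_nadd:
  assumes h: "nendo k m h" "selfadj k m h" and u: "u \<in> nn k m" and v: "v \<in> nn k m"
  shows "ninner k m (h (nadd u v)) (nadd u v)
       = ninner k m (h u) u + 2 * ninner k m (h u) v + ninner k m (h v) v"
proof -
  have "ninner k m (h v) u = ninner k m (h u) v"
    using h(2) u v by (simp add: selfadj_def ninner_sym)
  then show ?thesis
    using nendo_nadd[OF h(1) u v] by (simp add: ninner_nadd_left ninner_nadd_right)
qed

lemma NN_dest:
  assumes "h \<in> NN k m"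
  shows "nendo k m h" "selfadj k m h" "\<And>x. x \<in> galpha k m \<Longrightarrow> h x \<in> galpha k m"
    "\<And>x. x \<in> g2alpha k m \<Longrightarrow> h x \<in> g2alpha k m"
    "\<And>x y. x \<in> nn k m \<Longrightarrow> y \<in> nn k m \<Longrightarrow> h (nbr k m x y) = nadd (nbr k m (h x) y) (nbr k m x (h y))"
    "tr_alpha k m h + 2 * tr_2alpha k m h = 0"
  using assms by (auto simp: NN_def)

lemma nendo_galpha_part:
  assumes h: "nendo k m h" and kill: "\<And>z. z \<in> g2alpha k m \<Longrightarrow> h z = nzero" and x: "x \<in> nn k m"
  shows "h x = h (fst x, \<lambda>_. 0)"
proof -
  note parts = nn_decompose[OF x]
  have "h x = nadd (h (fst x, \<lambda>_. 0)) (h ((\<lambda>_ _. 0), snd x))"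
    using nendo_nadd[OF h galpha_nn[OF parts(2)] g2alpha_nn[OF parts(3)]] parts(1) by simp
  then show ?thesis using kill[OF parts(3)] by (simp add: nvec_eq)
qed

lemma nscale_nscale: "nscale c (nscale d x) = nscale (c * d) x"
  by (simp add: nvec_eq)

section \<open>Right multiplication by imaginary units\<close>

definition rmul :: "nat \<Rightarrow> nat \<Rightarrow> nvec \<Rightarrow> nvec" where
  "rmul k l x = ((\<lambda>i. cd_mult k (fst x i) (cd_unit l)), (\<lambda>_. 0))"

lemma snd_rmul [simp]: "snd (rmul k l x) = (\<lambda>_. 0)"
  by (simp add: rmul_def)

lemma rmul_galpha_part: "rmul k l x = rmul k l (fst x, \<lambda>_. 0)"
  by (simp add: rmul_def)

lemma ninner_rmul_galpha_part: "ninner k m (rmul k l p) q = ninner k m (rmul k l p) (fst q, \<lambda>_. 0)"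
  by (simp add: ninner_def)

definition rmul_chain :: "nat \<Rightarrow> nat list \<Rightarrow> nvec \<Rightarrow> nvec" where
  "rmul_chain k ls x = foldl (\<lambda>x l. rmul k l x) x ls"

lemma rmul_chain_Cons: "rmul_chain k (l # ls) x = rmul_chain k ls (rmul k l x)"
  by (simp add: rmul_chain_def)

lemma fst_rmul_chain: "fst (rmul_chain k ls x) i = foldl (\<lambda>a l. cd_mult k a (cd_unit l)) (fst x i) ls"
  by (induction ls arbitrary: x) (simp_all add: rmul_chain_def, simp add: rmul_def)

lemma snd_rmul_chain: "ls \<noteq> [] \<Longrightarrow> snd (rmul_chain k ls x) = (\<lambda>_. 0)"
  by (induction ls rule: rev_induct) (simp_all add: rmul_chain_def)

lemma foldl_cd_mult_support: "ls \<noteq> [] \<Longrightarrow> 2^k \<le> j \<Longrightarrow> foldl (\<lambda>a l. cd_mult k a (cd_unit l)) a ls j = 0"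
  by (induction ls arbitrary: a rule: rev_induct) (simp_all add: cd_mult_support)

lemma rmul_chain_volume:
  assumes vol: "\<And>a j. j < 2^k \<Longrightarrow> foldl (\<lambda>a l. cd_mult k a (cd_unit l)) a ls j = - a j"
    and ls: "ls \<noteq> []" and x: "x \<in> galpha k m"
  shows "rmul_chain k ls x = nscale (-1) x"
proof -
  have "foldl (\<lambda>a l. cd_mult k a (cd_unit l)) (fst x i) ls j = - fst x i j" for i j
    using vol foldl_cd_mult_support[OF ls] x by (cases "j < 2^k") (auto simp: galpha_iff)
  then show ?thesis using x by (simp add: nvec_eq fst_rmul_chain snd_rmul_chain[OF ls] galpha_iff)
qed

definition anticommutes :: "nat \<Rightarrow> nat \<Rightarrow> (nvec \<Rightarrow> nvec) \<Rightarrow> bool" where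
  "anticommutes k m h \<longleftrightarrow> (\<forall>l x. 0 < l \<longrightarrow> l < 2^k \<longrightarrow> x \<in> galpha k m \<longrightarrow>
      h (rmul k l x) = nscale (-1) (rmul k l (h x)))"

definition block_trace :: "nat \<Rightarrow> (nvec \<Rightarrow> nvec) \<Rightarrow> nat \<Rightarrow> real" where
  "block_trace k h i = (\<Sum>a<2^k. fst (h (ea i a)) i a)"

lemma tr_alpha_block_trace: "tr_alpha k m h = (\<Sum>i<m. block_trace k h i)"
  by (simp add: tr_alpha_def block_trace_def)

text \<open>The normed division algebras R, C, H, O are the Cayley--Dickson levels k <= 3.\<close>
locale division_level =
  fixes k :: nat
  assumes level_le_3: "k \<le> 3"
begin

lemma dim_le_8: "2^k \<le> (8::nat)"
  using power_increasing[OF level_le_3, of "2::nat"] by simp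

lemma level_cases:
  obtains "k = 0" | "k = 1" | "k = 2" | "k = 3"
  using level_le_3 by (auto simp: le_Suc_eq numeral_eq_Suc)

lemma right_mult_unit: "l < 2^k \<Longrightarrow> j < 2^k \<Longrightarrow> cd_mult k a (cd_unit l) j = cd_sign l j * a (xor j l)"
  using right_mult0 right_mult1 right_mult2 right_mult3 by (cases rule: level_cases) metis+

lemma conj_mult_imag: "0 < l \<Longrightarrow> l < 2^k \<Longrightarrow>
    cd_mult k (cd_conj k a) b l = (\<Sum>j<2^k. cd_mult k a (cd_unit l) j * b j)"
  using conj_mult1 conj_mult2 conj_mult3 by (cases rule: level_cases) (simp, metis+)

lemma imag_orthonormal: "0 < l \<Longrightarrow> l < 2^k \<Longrightarrow> 0 < l' \<Longrightarrow> l' < 2^k \<Longrightarrow>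
    cd_mult k (cd_conj k a) (cd_mult k a (cd_unit l)) l' = (if l' = l then (\<Sum>j<2^k. a j * a j) else 0)"
  using imag_orth1 imag_orth2 imag_orth3 by (cases rule: level_cases) (simp, metis+)

lemma sign_square: "l < 2^k \<Longrightarrow> j < 2^k \<Longrightarrow> cd_sign l j * cd_sign l j = 1"
  using cd_sign_square dim_le_8 by simp

lemma sign_flip: "0 < l \<Longrightarrow> l < 2^k \<Longrightarrow> j < 2^k \<Longrightarrow> cd_sign l (xor j l) = - cd_sign l j"
  using cd_sign_flip dim_le_8 by simp

lemma rmul_coord: "l < 2^k \<Longrightarrow>
    fst (rmul k l x) i j = (if j < 2^k then cd_sign l j * fst x i (xor j l) else 0)"
  by (simp add: rmul_def right_mult_unit cd_mult_support)

lemma rmul_galpha: "x \<in> galpha k m \<Longrightarrow> l < 2^k \<Longrightarrow> rmul k l x \<in> galpha k m"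
  by (simp add: galpha_iff rmul_coord)

lemma rmul_nadd: "l < 2^k \<Longrightarrow> rmul k l (nadd x y) = nadd (rmul k l x) (rmul k l y)"
  by (simp add: nvec_eq rmul_coord algebra_simps)

lemma rmul_nscale: "l < 2^k \<Longrightarrow> rmul k l (nscale c x) = nscale c (rmul k l x)"
  by (simp add: nvec_eq rmul_coord)

lemma rmul_nzero: "l < 2^k \<Longrightarrow> rmul k l nzero = nzero"
  by (simp add: nvec_eq rmul_coord)

lemma rmul_rmul:
  assumes "x \<in> galpha k m" "0 < l" "l < 2^k"
  shows "rmul k l (rmul k l x) = nscale (-1) x"
proof -
  have "fst (rmul k l (rmul k l x)) i j = - fst x i j" for i j
  proof (cases "j < 2^k")
    case True
    then have "xor j l < 2^k" using assms(3) by (rule xor_less_power2)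
    then show ?thesis
      using True assms sign_flip[of l j] sign_square[of l j]
      by (simp add: rmul_coord xor_xor_cancel algebra_simps)
  next
    case False
    then show ?thesis using assms by (simp add: rmul_coord galpha_iff)
  qed
  then show ?thesis using assms(1) by (simp add: nvec_eq galpha_iff)
qed

text \<open>R_l is skew-adjoint, hence (as R_l^2 = -1) orthogonal.\<close>
lemma sign_sum_skew:
  assumes "0 < l" "l < 2^k"
  shows "(\<Sum>j<2^k. cd_sign l j * a (xor j l) * b j) = - (\<Sum>j<2^k. a j * (cd_sign l j * b (xor j l)))"
proof -
  have "(\<Sum>j<2^k. a j * (cd_sign l j * b (xor j l)))
      = (\<Sum>j<2^k. a (xor j l) * (cd_sign l (xor j l) * b (xor (xor j l) l)))"
    using sum_xor_reindex[OF assms(2), of "\<lambda>j. a j * (cd_sign l j * b (xor j l))"] by simp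
  also have "\<dots> = - (\<Sum>j<2^k. cd_sign l j * a (xor j l) * b j)"
    using assms by (simp add: sign_flip xor_xor_cancel sum_negf[symmetric] algebra_simps)
  finally show ?thesis by simp
qed

lemma rmul_skew:
  assumes "0 < l" "l < 2^k"
  shows "ninner k m (rmul k l x) y = - ninner k m x (rmul k l y)"
proof -
  have "(\<Sum>j<2^k. fst (rmul k l x) i j * fst y i j) = - (\<Sum>j<2^k. fst x i j * fst (rmul k l y) i j)" for i
    using sign_sum_skew[OF assms, of "fst x i" "fst y i"] assms by (simp add: rmul_coord)
  then show ?thesis by (simp add: ninner_def sum_negf)
qed

lemma rmul_orth:
  assumes "0 < l" "l < 2^k" "y \<in> galpha k m"
  shows "ninner k m (rmul k l x) (rmul k l y) = ninner k m x y"
  using assms by (simp add: rmul_skew rmul_rmul ninner_nscale_right)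

lemma rmul_ea:
  assumes "l < 2^k" "a < 2^k"
  shows "rmul k l (ea i a) = nscale (cd_sign l (xor a l)) (ea i (xor a l))"
  using assms xor_less_power2[OF assms(2,1)] by (auto simp: nvec_eq rmul_coord xor_eq_iff)

lemma rmul_ea_real: "l < 2^k \<Longrightarrow> rmul k l (ea i 0) = ea i l"
  using rmul_ea[of l 0 i] cd_sign_diag dim_le_8 by (simp add: nvec_eq)

lemma nbr_coord: "0 < l \<Longrightarrow> l < 2^k \<Longrightarrow> snd (nbr k m p q) l = 2 * ninner k m (rmul k l p) q"
  by (simp add: nbr_def cd_im_def ninner_def rmul_def conj_mult_imag)

lemma nbr_nzero_left: "nbr k m nzero q = nzero"
proof -
  have "snd (nbr k m nzero q) j = 0" for j
  proof (cases "0 < j \<and> j < 2^k")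
    case True
    then show ?thesis by (simp add: nbr_coord rmul_nzero)
  qed (auto simp: nbr_def cd_im_def)
  then show ?thesis by (simp add: nvec_eq)
qed

lemma nbr_nzero_right: "nbr k m p nzero = nzero"
proof -
  have "snd (nbr k m p nzero) j = 0" for j
  proof (cases "0 < j \<and> j < 2^k")
    case True
    then show ?thesis by (simp add: nbr_coord ninner_sym)
  qed (auto simp: nbr_def cd_im_def)
  then show ?thesis by (simp add: nvec_eq)
qed

lemma nbr_rmul_self:
  assumes x: "x \<in> galpha k m" and l: "0 < l" "l < 2^k"
  shows "nbr k m x (rmul k l x) = nscale (2 * ninner k m x x) (ez l)"
proof -
  have "snd (nbr k m x (rmul k l x)) j = 2 * ninner k m x x * (if j = l then 1 else 0)" for j
  proof (cases "0 < j \<and> j < 2^k")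
    case True
    have "(\<Sum>i<m. cd_mult k (cd_conj k (fst x i)) (cd_mult k (fst x i) (cd_unit l)) j)
        = (if j = l then ninner k m x x else 0)"
      using True l x by (simp add: imag_orthonormal ninner_def galpha_iff)
    then show ?thesis using True by (simp add: nbr_def cd_im_def rmul_def)
  next
    case False
    then show ?thesis using l by (auto simp: nbr_def cd_im_def)
  qed
  then show ?thesis by (simp add: nvec_eq)
qed

lemma g2alpha_bracket:
  assumes m: "0 < m" and z: "z \<in> g2alpha k m"
  shows "\<exists>y\<in>galpha k m. nbr k m (ea 0 0) y = z"
proof
  define y :: nvec where "y = ((\<lambda>i j. if i = 0 \<and> j < 2^k then snd z j / 2 else 0), (\<lambda>_. 0))"
  show y_galpha: "y \<in> galpha k m"
    using m by (simp add: y_def galpha_iff)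
  have "snd (nbr k m (ea 0 0) y) l = snd z l" for l
  proof (cases "0 < l \<and> l < 2^k")
    case True
    then have "snd (nbr k m (ea 0 0) y) l = 2 * ninner k m y (ea 0 l)"
      by (simp add: nbr_coord rmul_ea_real ninner_sym)
    then show ?thesis using True m by (simp add: ninner_ea y_def)
  next
    case False
    then show ?thesis using z by (auto simp: nbr_def cd_im_def g2alpha_iff)
  qed
  then show "nbr k m (ea 0 0) y = z" using z by (simp add: nvec_eq g2alpha_iff)
qed

subsection \<open>Elements of N anticommute with the R_l\<close>

text \<open>Apply the derivation property to [x, R_l x] = 2|x|^2 e_l and read off the e_l-coordinate.\<close>
lemma NN_rmul_quadratic:
  assumes h: "h \<in> NN k m" and x: "x \<in> galpha k m" and l: "0 < l" "l < 2^k"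
  shows "snd (h (ez l)) l * ninner k m x x
       = ninner k m (h x) x + ninner k m (h (rmul k l x)) (rmul k l x)"
proof -
  note N = NN_dest[OF h]
  have Rx: "rmul k l x \<in> galpha k m" using rmul_galpha[OF x l(2)] .
  have "nscale (2 * ninner k m x x) (h (ez l)) = h (nbr k m x (rmul k l x))"
    using nbr_rmul_self[OF x l] nendo_nscale[OF N(1) g2alpha_nn[OF ez_g2alpha[OF l]]] by simp
  also have "\<dots> = nadd (nbr k m (h x) (rmul k l x)) (nbr k m x (h (rmul k l x)))"
    using N(5)[OF galpha_nn[OF x] galpha_nn[OF Rx]] .
  finally have "snd (nscale (2 * ninner k m x x) (h (ez l))) l
      = snd (nadd (nbr k m (h x) (rmul k l x)) (nbr k m x (h (rmul k l x)))) l"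
    by simp
  moreover have "snd (nadd (nbr k m (h x) (rmul k l x)) (nbr k m x (h (rmul k l x)))) l
      = 2 * ninner k m (h x) x + 2 * ninner k m (h (rmul k l x)) (rmul k l x)"
    using l by (simp add: nbr_coord rmul_orth[OF l x] ninner_sym[of k m "rmul k l x"])
  ultimately have "2 * (snd (h (ez l)) l * ninner k m x x)
      = 2 * (ninner k m (h x) x + ninner k m (h (rmul k l x)) (rmul k l x))"
    by (simp add: algebra_simps)
  then show ?thesis by simp
qed

lemma NN_rmul_polar:
  assumes h: "h \<in> NN k m" and x: "x \<in> galpha k m" and y: "y \<in> galpha k m" and l: "0 < l" "l < 2^k"
  shows "snd (h (ez l)) l * ninner k m x y
       = ninner k m (h x) y + ninner k m (h (rmul k l x)) (rmul k l y)"
proof -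
  note N = NN_dest[OF h]
  note quad = NN_rmul_quadratic[OF h _ l]
  note polar = selfadj_quadratic_nadd[OF N(1,2)]
  have xy: "nadd x y \<in> galpha k m" using galpha_nadd[OF x y] .
  have R: "rmul k l x \<in> galpha k m" "rmul k l y \<in> galpha k m" using rmul_galpha x y l by auto
  have "ninner k m (nadd x y) (nadd x y) = ninner k m x x + 2 * ninner k m x y + ninner k m y y"
    by (simp add: ninner_nadd_left ninner_nadd_right ninner_sym)
  then show ?thesis
    using quad[OF x] quad[OF y] quad[OF xy] polar[OF galpha_nn[OF x] galpha_nn[OF y]]
      polar[OF galpha_nn[OF R(1)] galpha_nn[OF R(2)]]
    by (simp add: rmul_nadd l(2) algebra_simps)
qed

lemma NN_anticommute_defect:
  assumes h: "h \<in> NN k m" and x: "x \<in> galpha k m" and l: "0 < l" "l < 2^k"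
  shows "nadd (h (rmul k l x)) (rmul k l (h x)) = nscale (snd (h (ez l)) l) (rmul k l x)"
proof (rule galpha_ext)
  note N = NN_dest[OF h]
  have Rx: "rmul k l x \<in> galpha k m" using rmul_galpha[OF x l(2)] .
  show "nadd (h (rmul k l x)) (rmul k l (h x)) \<in> galpha k m"
    using N(3)[OF Rx] rmul_galpha[OF N(3)[OF x] l(2)] by (rule galpha_nadd)
  show "nscale (snd (h (ez l)) l) (rmul k l x) \<in> galpha k m"
    using Rx by (rule galpha_nscale)
  fix y assume y: "y \<in> galpha k m"
  have "h (rmul k l (rmul k l x)) = nscale (-1) (h x)"
    using rmul_rmul[OF x l] nendo_nscale[OF N(1) galpha_nn[OF x]] by simp
  then have "ninner k m (h (rmul k l (rmul k l x))) (rmul k l y) = ninner k m (rmul k l (h x)) y"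
    using rmul_skew[OF l, where x = "h x" and y = y] by (simp add: ninner_nscale_left)
  then show "ninner k m (nadd (h (rmul k l x)) (rmul k l (h x))) y
      = ninner k m (nscale (snd (h (ez l)) l) (rmul k l x)) y"
    using NN_rmul_polar[OF h Rx y l] by (simp add: ninner_nadd_left ninner_nscale_left)
qed

lemma diag_rmul_ea:
  assumes h: "nendo k m h" and i: "i < m" and a: "a < 2^k" and l: "l < 2^k"
  shows "ninner k m (h (rmul k l (ea i a))) (rmul k l (ea i a)) = fst (h (ea i (xor a l))) i (xor a l)"
proof -
  have b: "xor a l < 2^k" using xor_less_power2[OF a l] .
  have "h (rmul k l (ea i a)) = nscale (cd_sign l (xor a l)) (h (ea i (xor a l)))"
    using rmul_ea[OF l a] nendo_nscale[OF h galpha_nn[OF ea_galpha[OF i b]]] by simp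
  then show ?thesis
    using rmul_ea[OF l a] sign_square[OF l b] i b
    by (simp add: ninner_nscale_left ninner_nscale_right ninner_ea)
qed

text \<open>Summing the quadratic identity over the standard basis: 2 tr(h|K) = 2^k c_l.\<close>
lemma NN_block_trace:
  assumes h: "h \<in> NN k m" and i: "i < m" and l: "0 < l" "l < 2^k"
  shows "2 * block_trace k h i = 2^k * snd (h (ez l)) l"
proof -
  note N = NN_dest[OF h]
  have pair: "fst (h (ea i a)) i a + fst (h (ea i (xor a l))) i (xor a l) = snd (h (ez l)) l"
    if a: "a < 2^k" for a
    using NN_rmul_quadratic[OF h ea_galpha[OF i a] l] diag_rmul_ea[OF N(1) i a l(2)] i a
    by (simp add: ninner_ea)
  have "2 * block_trace k h i
      = (\<Sum>a<2^k. fst (h (ea i a)) i a) + (\<Sum>a<2^k. fst (h (ea i (xor a l))) i (xor a l))"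
    using sum_xor_reindex[OF l(2), of "\<lambda>a. fst (h (ea i a)) i a"] by (simp add: block_trace_def)
  also have "\<dots> = (\<Sum>a<(2::nat)^k. snd (h (ez l)) l)"
    by (simp add: sum.distrib[symmetric] pair)
  finally show ?thesis by simp
qed

lemma NN_diag_g2alpha_zero:
  assumes h: "h \<in> NN k m" and m: "0 < m" and l: "0 < l" "l < 2^k"
  shows "snd (h (ez l)) l = 0"
proof -
  define c where "c = snd (h (ez l)) l"
  have all_c: "snd (h (ez l')) l' = c" if "0 < l'" "l' < 2^k" for l'
    using NN_block_trace[OF h m that] NN_block_trace[OF h m l] by (simp add: c_def)
  have "2 * tr_alpha k m h = (\<Sum>i<m. 2 * block_trace k h i)"
    by (simp add: tr_alpha_block_trace sum_distrib_left)
  also have "\<dots> = real m * 2^k * c"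
    using NN_block_trace[OF h _ l] by (simp add: c_def)
  finally have tra: "2 * tr_alpha k m h = real m * 2^k * c" .
  have "tr_2alpha k m h = (\<Sum>l'\<in>{1..<(2::nat)^k}. c)"
    unfolding tr_2alpha_def by (rule sum.cong) (auto intro: all_c)
  then have tr2: "tr_2alpha k m h = real (2^k - 1) * c" by simp
  have "(real m * 2^k + 4 * real (2^k - 1)) * c = 0"
    using NN_dest(6)[OF h] tra tr2 by (simp add: algebra_simps)
  moreover have "real m * 2^k + 4 * real (2^k - 1) > 0"
    using m by (intro add_pos_nonneg) simp_all
  ultimately show ?thesis by (simp add: c_def)
qed

lemma NN_anticommutes:
  assumes h: "h \<in> NN k m" and m: "0 < m"
  shows "anticommutes k m h"
  unfolding anticommutes_def
proof (intro allI impI)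
  fix l :: nat and x assume l: "0 < l" "l < 2^k" and x: "x \<in> galpha k m"
  show "h (rmul k l x) = nscale (-1) (rmul k l (h x))"
    using NN_anticommute_defect[OF h x l] NN_diag_g2alpha_zero[OF h m l]
    by (simp add: nvec_eq eq_neg_iff_add_eq_0)
qed

subsection \<open>Anticommuting self-adjoint maps lie in N\<close>

lemma anticommutesD:
  "anticommutes k m h \<Longrightarrow> 0 < l \<Longrightarrow> l < 2^k \<Longrightarrow> x \<in> galpha k m
    \<Longrightarrow> h (rmul k l x) = nscale (-1) (rmul k l (h x))"
  unfolding anticommutes_def by blast

text \<open>An anticommuting map is traceless: R_l pairs the diagonal entries with opposite signs.\<close>
lemma anticommutes_trace:
  fixes l :: nat
  assumes h: "nendo k m h" and anti: "anticommutes k m h" and l: "0 < l" "l < 2^k"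
  shows "tr_alpha k m h = 0"
proof -
  have "block_trace k h i = 0" if i: "i < m" for i
  proof -
    have "fst (h (ea i (xor a l))) i (xor a l) = - fst (h (ea i a)) i a" if a: "a < 2^k" for a
    proof -
      have e: "ea i a \<in> galpha k m" using ea_galpha[OF i a] .
      have "fst (h (ea i (xor a l))) i (xor a l)
          = - ninner k m (rmul k l (h (ea i a))) (rmul k l (ea i a))"
        using diag_rmul_ea[OF h i a l(2)] anticommutesD[OF anti l e] by (simp add: ninner_nscale_left)
      then show ?thesis using rmul_orth[OF l e] i a by (simp add: ninner_ea)
    qed
    then have "block_trace k h i = - block_trace k h i"
      using sum_xor_reindex[OF l(2), of "\<lambda>a. fst (h (ea i a)) i a"]
      by (simp add: block_trace_def sum_negf)
    then show ?thesis by simp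
  qed
  then show ?thesis by (simp add: tr_alpha_block_trace)
qed

text \<open>The e_l-coordinate of [hx, y] + [x, hy] is 2<R_l hx, y> + 2<R_l x, hy>, which
  vanishes by self-adjointness and anticommutation.\<close>
lemma anticommutes_derivation:
  assumes h: "nendo k m h" and pres: "\<And>x. x \<in> galpha k m \<Longrightarrow> h x \<in> galpha k m"
    and kill: "\<And>z. z \<in> g2alpha k m \<Longrightarrow> h z = nzero"
    and sa: "selfadj k m h" and anti: "anticommutes k m h"
    and x: "x \<in> nn k m" and y: "y \<in> nn k m"
  shows "h (nbr k m x y) = nadd (nbr k m (h x) y) (nbr k m x (h y))"
proof -
  define xa :: nvec where "xa = (fst x, \<lambda>_. 0)"
  define ya :: nvec where "ya = (fst y, \<lambda>_. 0)"
  have xa: "xa \<in> galpha k m" and ya: "ya \<in> galpha k m"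
    using nn_decompose(2)[OF x] nn_decompose(2)[OF y] by (simp_all add: xa_def ya_def)
  have hx: "h x = h xa" and hy: "h y = h ya"
    using nendo_galpha_part[OF h kill] x y by (simp_all add: xa_def ya_def)
  have "snd (nbr k m (h x) y) l + snd (nbr k m x (h y)) l = 0" for l
  proof (cases "0 < l \<and> l < 2^k")
    case True
    then have l: "0 < l" "l < 2^k" by auto
    have "ninner k m (rmul k l xa) (h ya) = ninner k m (h (rmul k l xa)) ya"
      using sa galpha_nn[OF rmul_galpha[OF xa l(2)]] galpha_nn[OF ya] by (simp add: selfadj_def)
    also have "\<dots> = - ninner k m (rmul k l (h xa)) ya"
      using anticommutesD[OF anti l xa] by (simp add: ninner_nscale_left)
    finally have "ninner k m (rmul k l x) (h y) = - ninner k m (rmul k l (h x)) y"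
      using ninner_rmul_galpha_part[of k m l "h x" y] rmul_galpha_part[of k l x]
      by (simp add: hx hy xa_def ya_def)
    then show ?thesis using l by (simp add: nbr_coord)
  next
    case False
    then show ?thesis by (auto simp: nbr_def cd_im_def)
  qed
  then have "nadd (nbr k m (h x) y) (nbr k m x (h y)) = nzero"
    by (simp add: nvec_eq)
  then show ?thesis using kill[OF nbr_g2alpha] by simp
qed

lemma anticommutes_NN:
  assumes h: "nendo k m h" and pres: "\<And>x. x \<in> galpha k m \<Longrightarrow> h x \<in> galpha k m"
    and kill: "\<And>z. z \<in> g2alpha k m \<Longrightarrow> h z = nzero"
    and sa: "selfadj k m h" and anti: "anticommutes k m h" and tr: "tr_alpha k m h = 0"
  shows "h \<in> NN k m"
proof -
  have "tr_2alpha k m h = 0"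
    unfolding tr_2alpha_def by (rule sum.neutral) (auto simp: kill ez_g2alpha)
  then show ?thesis
    using assms anticommutes_derivation[OF h pres kill sa anti] by (auto simp: NN_def)
qed

subsection \<open>The case of a volume element\<close>

lemma rmul_chain_nscale: "set ls \<subseteq> {..<2^k} \<Longrightarrow> rmul_chain k ls (nscale c x) = nscale c (rmul_chain k ls x)"
  by (induction ls arbitrary: x) (simp_all add: rmul_chain_Cons rmul_nscale, simp add: rmul_chain_def)

lemma volume_element:
  assumes "2 \<le> k"
  obtains ls where "odd (length ls)" "set ls \<subseteq> {0<..<2^k}"
    "\<And>x. x \<in> galpha k m \<Longrightarrow> rmul_chain k ls x = nscale (-1) x"
proof (cases rule: level_cases)
  case 3
  have "\<And>a j. j < 2^k \<Longrightarrow> foldl (\<lambda>a l. cd_mult k a (cd_unit l)) a [1, 2, 3] j = - a j"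
    using volume2 \<open>k = 2\<close> by metis
  from rmul_chain_volume[OF this] show ?thesis
    by (rule that[rotated 2]) (simp_all add: \<open>k = 2\<close>)
next
  case 4
  have "\<And>a j. j < 2^k \<Longrightarrow> foldl (\<lambda>a l. cd_mult k a (cd_unit l)) a [1, 2, 3, 4, 5, 6, 7] j = - a j"
    using volume3 \<open>k = 3\<close> by metis
  from rmul_chain_volume[OF this] show ?thesis
    by (rule that[rotated 2]) (simp_all add: \<open>k = 3\<close>)
qed (use assms in auto)

lemma anticommutes_rmul_chain:
  assumes h: "nendo k m h" and anti: "anticommutes k m h"
    and ls: "set ls \<subseteq> {0<..<2^k}" and x: "x \<in> galpha k m"
  shows "h (rmul_chain k ls x) = nscale ((-1)^length ls) (rmul_chain k ls (h x))"
  using ls x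
proof (induction ls arbitrary: x)
  case Nil
  then show ?case by (simp add: rmul_chain_def nvec_eq)
next
  case (Cons l ls)
  then have l: "0 < l" "l < 2^k" and ls': "set ls \<subseteq> {..<2^k}" by auto
  have "h (rmul_chain k (l # ls) x) = nscale ((-1)^length ls) (rmul_chain k ls (h (rmul k l x)))"
    using Cons rmul_galpha by (simp add: rmul_chain_Cons)
  also have "\<dots> = nscale ((-1)^length (l # ls)) (rmul_chain k (l # ls) (h x))"
    using anticommutesD[OF anti l Cons.prems(2)]
    by (simp add: rmul_chain_nscale[OF ls'] nscale_nscale rmul_chain_Cons)
  finally show ?case .
qed

text \<open>For H and O an element of N vanishes on g_alpha, hence (by the bracket) on g_2alpha.\<close>
lemma NN_vanishes_of_volume:
  assumes k: "2 \<le> k" and m: "0 < m" and h: "h \<in> NN k m" and x: "x \<in> nn k m"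
  shows "h x = nzero"
proof -
  note N = NN_dest[OF h]
  obtain ls where odd: "odd (length ls)" and ls: "set ls \<subseteq> {0<..<2^k}"
    and vol: "\<And>x. x \<in> galpha k m \<Longrightarrow> rmul_chain k ls x = nscale (-1) x"
    using volume_element[OF k] by blast
  have on_galpha: "h y = nzero" if y: "y \<in> galpha k m" for y
  proof -
    have "nscale (-1) (h y) = h (rmul_chain k ls y)"
      using vol[OF y] nendo_nscale[OF N(1) galpha_nn[OF y]] by simp
    also have "\<dots> = nscale (-1) (rmul_chain k ls (h y))"
      using anticommutes_rmul_chain[OF N(1) NN_anticommutes[OF h m] ls y] odd by simp
    also have "\<dots> = h y"
      using vol[OF N(3)[OF y]] by (simp add: nscale_nscale nvec_eq)
    finally show ?thesis by (simp add: nvec_eq)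
  qed
  have "h z = nzero" if z: "z \<in> g2alpha k m" for z
  proof -
    obtain y where y: "y \<in> galpha k m" and zy: "nbr k m (ea 0 0) y = z"
      using g2alpha_bracket[OF m z] by blast
    have e: "ea 0 0 \<in> galpha k m" using ea_galpha[OF m, of 0 k] by simp
    show ?thesis
      using N(5)[OF galpha_nn[OF e] galpha_nn[OF y]] zy on_galpha[OF e] on_galpha[OF y]
      by (simp add: nbr_nzero_left nbr_nzero_right nvec_eq)
  qed
  then show ?thesis using nendo_vanishes[OF N(1) on_galpha _ x] by blast
qed

lemma NN_iff_vanishes:
  assumes k: "2 \<le> k" and m: "0 < m" and h: "nendo k m h"
  shows "h \<in> NN k m \<longleftrightarrow> (\<forall>x\<in>nn k m. h x = nzero)"
proof
  assume "h \<in> NN k m"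
  then show "\<forall>x\<in>nn k m. h x = nzero" using NN_vanishes_of_volume[OF k m] by blast
next
  assume zero: "\<forall>x\<in>nn k m. h x = nzero"
  have "anticommutes k m h"
    unfolding anticommutes_def
  proof (intro allI impI)
    fix l :: nat and x assume l: "0 < l" "l < 2^k" and x: "x \<in> galpha k m"
    show "h (rmul k l x) = nscale (-1) (rmul k l (h x))"
    proof -
      have "h x = nzero" "h (rmul k l x) = nzero"
        using zero galpha_nn[OF x] galpha_nn[OF rmul_galpha[OF x l(2)]] by auto
      moreover have "nscale (-1) nzero = nzero" by (simp add: nvec_eq)
      ultimately show ?thesis by (simp add: rmul_nzero[OF l(2)])
    qed
  qed
  moreover have "tr_alpha k m h = 0"
    using zero galpha_nn ea_galpha by (simp add: tr_alpha_def)
  ultimately show "h \<in> NN k m"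
    using zero galpha_nn g2alpha_nn by (intro anticommutes_NN[OF h]) (simp_all add: selfadj_def)
qed

end

section \<open>The four rank one symmetric spaces\<close>

interpretation real_level: division_level 0 by unfold_locales simp
interpretation complex_level: division_level 1 by unfold_locales simp
interpretation quaternion_level: division_level 2 by unfold_locales simp
interpretation octonion_level: division_level 3 by unfold_locales simp

lemma real_case:
  assumes h: "nendo 0 m h"
  shows "h \<in> NN 0 m \<longleftrightarrow> selfadj 0 m h \<and> tr_alpha 0 m h = 0"
proof
  assume hN: "h \<in> NN 0 m"
  have "tr_2alpha 0 m h = 0" by (simp add: tr_2alpha_def)
  then show "selfadj 0 m h \<and> tr_alpha 0 m h = 0" using NN_dest(2,6)[OF hN] by simp
next
  assume sa_tr: "selfadj 0 m h \<and> tr_alpha 0 m h = 0"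
  have snd_zero: "snd x = (\<lambda>_. 0)" if "x \<in> nn 0 m" for x
  proof -
    have "snd x 0 = 0" "\<forall>j. 1 \<le> j \<longrightarrow> snd x j = 0" using that by (simp_all add: nn_iff)
    then have "snd x j = 0" for j by (cases "j = 0") simp_all
    then show ?thesis by auto
  qed
  have pres: "h x \<in> galpha 0 m" if "x \<in> galpha 0 m" for x
  proof -
    have hx: "h x \<in> nn 0 m" using nendo_nn[OF h galpha_nn[OF that]] .
    then show ?thesis using snd_zero[OF hx] by (simp add: galpha_iff nn_iff)
  qed
  have kill: "h z = nzero" if "z \<in> g2alpha 0 m" for z
  proof -
    have "z = nzero" using that snd_zero[OF g2alpha_nn[OF that]] by (simp add: g2alpha_iff nvec_eq)
    then show ?thesis using nendo_nzero[OF h] by simp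
  qed
  have "anticommutes 0 m h" by (simp add: anticommutes_def)
  then show "h \<in> NN 0 m"
    using real_level.anticommutes_NN[OF h pres kill] sa_tr by blast
qed

text \<open>C is commutative, so multiplication by i (the complex structure J) equals R_1.\<close>
lemma cd_mult1_comm: "cd_mult 1 a b = cd_mult 1 b a"
  by (simp add: fun_eq_iff cd_join_def cd_lo_def cd_hi_def algebra_simps)

lemma cJ_eq_rmul: "cJ x = rmul 1 1 x"
  unfolding cJ_def rmul_def cd_unit_def by (subst cd_mult1_comm) (rule refl)

lemma g2alpha_complex:
  assumes "z \<in> g2alpha 1 m"
  shows "z = nscale (snd z 1) (ez 1)"
proof -
  have "snd z j = 0" if "j \<noteq> 1" for j
    using assms that by (cases "j = 0") (auto simp: g2alpha_iff)
  then show ?thesis using assms by (auto simp: g2alpha_iff nvec_eq)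
qed

lemma nadd_eq_nzero_iff: "nadd a b = nzero \<longleftrightarrow> b = nscale (-1) a"
  by (simp add: nvec_eq add_eq_0_iff)

lemma complex_case:
  assumes h: "nendo 1 m h" and m: "0 < m"
  shows "h \<in> NN 1 m \<longleftrightarrow>
           (\<forall>x\<in>galpha 1 m. h x \<in> galpha 1 m)
         \<and> (\<forall>x\<in>g2alpha 1 m. h x = nzero)
         \<and> selfadj 1 m h
         \<and> (\<forall>x\<in>galpha 1 m. nadd (cJ (h x)) (h (cJ x)) = nzero)"
  (is "_ \<longleftrightarrow> ?pres \<and> ?kill \<and> ?sa \<and> ?anti")
proof
  assume hN: "h \<in> NN 1 m"
  note N = NN_dest[OF hN]
  have e1: "ez 1 \<in> g2alpha 1 m" by (simp add: ez_g2alpha)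
  have "h (ez 1) = nscale (snd (h (ez 1)) 1) (ez 1)" using g2alpha_complex[OF N(4)[OF e1]] .
  also have "\<dots> = nscale 0 (ez 1)" using complex_level.NN_diag_g2alpha_zero[OF hN m, of 1] by simp
  finally have h_e1: "h (ez 1) = nzero" by (simp add: nvec_eq)
  have ?kill
  proof
    fix z assume z: "z \<in> g2alpha 1 m"
    have "h z = h (nscale (snd z 1) (ez 1))" using arg_cong[OF g2alpha_complex[OF z], of h] .
    also have "\<dots> = nscale (snd z 1) (h (ez 1))" using nendo_nscale[OF N(1) g2alpha_nn[OF e1]] .
    finally show "h z = nzero" using h_e1 by (simp add: nvec_eq)
  qed
  moreover have ?anti
  proof
    fix x assume x: "x \<in> galpha 1 m"
    have "h (rmul 1 1 x) = nscale (-1) (rmul 1 1 (h x))"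
      using complex_level.anticommutesD[OF complex_level.NN_anticommutes[OF hN m] _ _ x] by simp
    then show "nadd (cJ (h x)) (h (cJ x)) = nzero" by (simp add: cJ_eq_rmul nadd_eq_nzero_iff)
  qed
  ultimately show "?pres \<and> ?kill \<and> ?sa \<and> ?anti" using N(2,3) by blast
next
  assume "?pres \<and> ?kill \<and> ?sa \<and> ?anti"
  then have pres: ?pres and kill: ?kill and sa: ?sa and anti: ?anti by blast+
  have anticomm: "anticommutes 1 m h"
    unfolding anticommutes_def
  proof (intro allI impI)
    fix l :: nat and x assume l: "0 < l" "l < 2^1" and x: "x \<in> galpha 1 m"
    then have "l = 1" by simp
    moreover have "nadd (rmul 1 1 (h x)) (h (rmul 1 1 x)) = nzero" using anti x by (simp add: cJ_eq_rmul)
    ultimately show "h (rmul 1 l x) = nscale (-1) (rmul 1 l (h x))" by (simp add: nadd_eq_nzero_iff)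
  qed
  moreover have "tr_alpha 1 m h = 0"
    by (rule complex_level.anticommutes_trace[OF h anticomm, of 1]) simp_all
  ultimately show "h \<in> NN 1 m"
    using complex_level.anticommutes_NN[OF h] pres kill sa by blast
qed

text \<open>The main result, for n = m + 1 (and m = 1 for the octonionic plane).\<close>
theorem lemma5p12:
  shows "(\<forall>n::nat. n \<ge> 2 \<longrightarrow> (\<forall>h. nendo 0 (n - 1) h \<longrightarrow>
            (h \<in> NN 0 (n - 1) \<longleftrightarrow> selfadj 0 (n - 1) h \<and> tr_alpha 0 (n - 1) h = 0)))
       \<and> (\<forall>n::nat. n \<ge> 2 \<longrightarrow> (\<forall>h. nendo 1 (n - 1) h \<longrightarrow>
            (h \<in> NN 1 (n - 1) \<longleftrightarrow>
               (\<forall>x\<in>galpha 1 (n - 1). h x \<in> galpha 1 (n - 1))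
             \<and> (\<forall>x\<in>g2alpha 1 (n - 1). h x = nzero)
             \<and> selfadj 1 (n - 1) h
             \<and> (\<forall>x\<in>galpha 1 (n - 1). nadd (cJ (h x)) (h (cJ x)) = nzero))))
       \<and> (\<forall>n::nat. n \<ge> 2 \<longrightarrow> (\<forall>h. nendo 2 (n - 1) h \<longrightarrow>
            (h \<in> NN 2 (n - 1) \<longleftrightarrow> (\<forall>x\<in>nn 2 (n - 1). h x = nzero))))
       \<and> (\<forall>h. nendo 3 1 h \<longrightarrow> (h \<in> NN 3 1 \<longleftrightarrow> (\<forall>x\<in>nn 3 1. h x = nzero)))"
  by (intro conjI allI impI real_case complex_case quaternion_level.NN_iff_vanishes
      octonion_level.NN_iff_vanishes) simp_all

end
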